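(* For every (closed) term $P$: $P$ is doomed if and only if $[\![P]\!] = \varnothing$.
   Context: Fix a set $\Sigma$ of events. Terms: $P, Q ::= \mathit{STOP} \mid \mathit{FAIL} \mid ?x{:}E \rightarrow P \mid P \,\Box\, Q \mid P \parallel_E Q$, where an event set $E$ is $f(y_1,\dots,y_n)$ with $f : \Sigma^n \to 2^\Sigma$ computable and each $y_i$ an event variable or event; $x$ is bound in $P$ in $?x{:}E\rightarrow P$. Terms are closed, so each $E$ denotes a subset of $\Sigma$; $[e/x]P$ is substitution of event $e$ for $x$. Doomed terms are given by the grammar $D ::= \mathit{FAIL} \mid D \Box D \mid D \parallel_E P \mid P \parallel_E D$ with $P$ an arbitrary term. Trace semantics. A trace set is a prefix-closed subset of $\Sigma^*$ (possibly empty); $\varepsilon$ is the empty trace. For a trace set $T$: $eT := \{\varepsilon\} \cup \{et \mid t \in T\}$, $T(e) := \{t \mid et \in T\}$. For $E \subseteq \Sigma$, $\parallel_E$ on trace sets is the unique function with $\varnothing \parallel_E T = T \parallel_E \varnothing = \varnothing$ and, for nonempty $T_1, T_2$, $T_1 \parallel_E T_2 = \bigcup_{e \in E} e(T_1(e) \parallel_E T_2(e)) \cup \bigcup_{e \in \Sigma\setminus E}( e(T_1(e) \parallel_E T_2) \cup e(T_1 \parallel_E T_2(e)))$. The semantics: $[\![\mathit{STOP}]\!] = \{\varepsilon\}$, $[\![\mathit{FAIL}]\!] = \varnothing$, $[\![?x{:}E \rightarrow P]\!] = \{\varepsilon\} \cup \bigcup_{e \in E} e[\![ [e/x]P ]\!]$,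 $[\![P \Box Q]\!] = [\![P]\!] \cup [\![Q]\!]$, $[\![P \parallel_E Q]\!] = [\![P]\!] \parallel_E [\![Q]\!]$. *)

theory Defs
  imports Main
begin

text \<open>Events are elements of the type 'e (the set Sigma is UNIV).  An event-set expression f(y1,...,yn)
 is a pair (f, ys) with f :: 'e list => 'e set (n = length ys) and each yi
 a variable or an event.\<close>

datatype 'e evar = EVar nat | Ev 'e

type_synonym 'e eset = "('e list \<Rightarrow> 'e set) \<times> 'e evar list"

datatype 'e proc =
    STOP
  | FAIL
  | Prefix nat "'e eset" "'e proc"
  | Choice "'e proc" "'e proc"
  | Par "'e proc" "'e eset" "'e proc"

fun fv_evar :: "'e evar \<Rightarrow> nat set" where
  "fv_evar (EVar x) = {x}"
| "fv_evar (Ev e) = {}"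

definition fv_eset :: "'e eset \<Rightarrow> nat set" where
  "fv_eset E = (\<Union>y\<in>set (snd E). fv_evar y)"

fun fv :: "'e proc \<Rightarrow> nat set" where
  "fv STOP = {}"
| "fv FAIL = {}"
| "fv (Prefix x E P) = fv_eset E \<union> (fv P - {x})"
| "fv (Choice P Q) = fv P \<union> fv Q"
| "fv (Par P E Q) = fv P \<union> fv_eset E \<union> fv Q"

definition closed :: "'e proc \<Rightarrow> bool" where
  "closed P \<longleftrightarrow> fv P = {}"

fun subst_evar :: "'e \<Rightarrow> nat \<Rightarrow> 'e evar \<Rightarrow> 'e evar" where
  "subst_evar e x (EVar y) = (if y = x then Ev e else EVar y)"
| "subst_evar e x (Ev a) = Ev a"

definition subst_eset :: "'e \<Rightarrow> nat \<Rightarrow> 'e eset \<Rightarrow> 'e eset" where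
  "subst_eset e x E = (fst E, map (subst_evar e x) (snd E))"

fun subst :: "'e \<Rightarrow> nat \<Rightarrow> 'e proc \<Rightarrow> 'e proc" where
  "subst e x STOP = STOP"
| "subst e x FAIL = FAIL"
| "subst e x (Prefix y E P) =
     Prefix y (subst_eset e x E) (if y = x then P else subst e x P)"
| "subst e x (Choice P Q) = Choice (subst e x P) (subst e x Q)"
| "subst e x (Par P E Q) = Par (subst e x P) (subst_eset e x E) (subst e x Q)"

fun psize :: "'e proc \<Rightarrow> nat" where
  "psize STOP = 0"
| "psize FAIL = 0"
| "psize (Prefix y E P) = Suc (psize P)"
| "psize (Choice P Q) = Suc (psize P + psize Q)"
| "psize (Par P E Q) = Suc (psize P + psize Q)"

lemma psize_subst[simp]: "psize (subst e x P) = psize P"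
  by (induction P) auto

text \<open>Denotation of an event-set expression (meaningful for closed ones;
 variables, which never occur in closed terms, are mapped arbitrarily).\<close>
fun eval_evar :: "'e evar \<Rightarrow> 'e" where
  "eval_evar (Ev e) = e"
| "eval_evar (EVar x) = undefined"

definition eval_eset :: "'e eset \<Rightarrow> 'e set" where
  "eval_eset E = fst E (map eval_evar (snd E))"

definition prefix_closed :: "'e list set \<Rightarrow> bool" where
  "prefix_closed T \<longleftrightarrow> (\<forall>s t. s @ t \<in> T \<longrightarrow> s \<in> T)"

definition tcons :: "'e \<Rightarrow> 'e list set \<Rightarrow> 'e list set" where
  "tcons e T = {[]} \<union> {e # t | t. t \<in> T}"

definition tafter :: "'e list set \<Rightarrow> 'e \<Rightarrow> 'e list set" where
  "tafter T e = {t. e # t \<in> T}"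

text \<open>Parallel composition on trace sets, defined by recursion on the trace
 (this is the unique function satisfying the defining equations).\<close>
fun par_mem :: "'e set \<Rightarrow> 'e list set \<Rightarrow> 'e list set \<Rightarrow> 'e list \<Rightarrow> bool" where
  "par_mem E T1 T2 [] \<longleftrightarrow> T1 \<noteq> {} \<and> T2 \<noteq> {}"
| "par_mem E T1 T2 (e # t) \<longleftrightarrow> T1 \<noteq> {} \<and> T2 \<noteq> {} \<and>
     (if e \<in> E then par_mem E (tafter T1 e) (tafter T2 e) t
      else (par_mem E (tafter T1 e) T2 t \<or> par_mem E T1 (tafter T2 e) t))"

definition tpar :: "'e list set \<Rightarrow> 'e set \<Rightarrow> 'e list set \<Rightarrow> 'e list set" where
  "tpar T1 E T2 = {t. par_mem E T1 T2 t}"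

function (sequential) sem :: "'e proc \<Rightarrow> 'e list set" where
  "sem STOP = {[]}"
| "sem FAIL = {}"
| "sem (Prefix x E P) = {[]} \<union> (\<Union>e\<in>eval_eset E. tcons e (sem (subst e x P)))"
| "sem (Choice P Q) = sem P \<union> sem Q"
| "sem (Par P E Q) = tpar (sem P) (eval_eset E) (sem Q)"
  by pat_completeness auto
termination
  by (relation "measure psize") auto

inductive doomed :: "'e proc \<Rightarrow> bool" where
  "doomed FAIL"
| "doomed D1 \<Longrightarrow> doomed D2 \<Longrightarrow> doomed (Choice D1 D2)"
| "doomed D \<Longrightarrow> doomed (Par D E P)"
| "doomed D \<Longrightarrow> doomed (Par P E D)"

end

theory Submission
  imports Defs
begin

text \<open>STOP and every prefix term contain the empty trace, a choice is empty iff both branches are, and a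
 parallel composition is empty iff one component is; these are precisely the clauses
 of the grammar of doomed terms, so structural induction gives the characterisation.\<close>

lemma par_mem_empty_left: "\<not> par_mem E {} T2 t"
  by (cases t) auto

lemma par_mem_empty_right: "\<not> par_mem E T1 {} t"
  by (cases t) auto

lemma tpar_eq_empty_iff: "tpar T1 E T2 = {} \<longleftrightarrow> T1 = {} \<or> T2 = {}"
proof
  assume "tpar T1 E T2 = {}"
  then have "[] \<notin> tpar T1 E T2"
    by simp
  then show "T1 = {} \<or> T2 = {}"
    by (simp add: tpar_def)
next
  assume "T1 = {} \<or> T2 = {}"
  then show "tpar T1 E T2 = {}"
    by (auto simp: tpar_def par_mem_empty_left par_mem_empty_right)
qed

lemma not_doomed_STOP: "\<not> doomed STOP"
  by (auto elim: doomed.cases)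

lemma not_doomed_Prefix: "\<not> doomed (Prefix x E P)"
  by (auto elim: doomed.cases)

lemma doomed_Choice_iff: "doomed (Choice P Q) \<longleftrightarrow> doomed P \<and> doomed Q"
  by (auto intro: doomed.intros elim: doomed.cases)

lemma doomed_Par_iff: "doomed (Par P E Q) \<longleftrightarrow> doomed P \<or> doomed Q"
  by (auto intro: doomed.intros elim: doomed.cases)

lemma doomed_iff_sem_eq_empty: "doomed P \<longleftrightarrow> sem P = {}"
proof (induction P)
  case STOP
  show ?case by (simp add: not_doomed_STOP)
next
  case FAIL
  show ?case by (simp add: doomed.intros)
next
  case (Prefix x E P)
  show ?case by (simp add: not_doomed_Prefix)
next
  case (Choice P Q)
  then show ?case by (simp add: doomed_Choice_iff)
next
  case (Par P E Q)
  then show ?case by (simp add: doomed_Par_iff tpar_eq_empty_iff)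
qed

theorem proposition2:
  fixes P :: "'e proc"
  assumes "closed P"
  shows "doomed P \<longleftrightarrow> sem P = {}"
  by (rule doomed_iff_sem_eq_empty)

end
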